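(* Let $A$ be a Banach algebra and $n\ge 2$ such that $Mul_{n,l}(A,A^{*})$ is algebraically reflexive, and let $X$ be a right Banach $A$-module with $\{x\in X: x^{\perp}=A\}=\{0\}$. Then every approximately local left $n$-multiplier from $A$ into $X$ is a left $n$-multiplier.
   Context: $A^*$ is the dual of $A$, a right Banach $A$-module via $(f\cdot a)(b)=f(ab)$. A bounded linear map $T:A\to X$ is a left $n$-multiplier if $T(a_1\cdots a_n)=T(a_1\cdots a_{n-1})\cdot a_n$ for all $a_i\in A$; $Mul_{n,l}(A,X)$ is the set of these. $T$ is an approximately local left $n$-multiplier if for every $a\in A$ there is a sequence $(T_{a,m})_m$ in $Mul_{n,l}(A,X)$ with $T(a)=\lim_m T_{a,m}(a)$. For $S\subseteq B(A,Y)$, $\mathrm{ref}(S)=\{T\in B(A,Y): T(x)\in\overline{\{s(x):s\in S\}}\ \forall x\in A\}$; $S$ is algebraically reflexive if $\mathrm{ref}(S)\subseteq S$. For $x\in X$, $x^\perp=\{a\in A: x\cdot a=0\}$. *)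

theory Defs
  imports "HOL-Analysis.Analysis"
begin

(* Product a_1 * ... * a_k of a nonempty list (multiplication is associative,
   not necessarily commutative, no unit required). *)
definition lprod :: "'a::real_normed_algebra list \<Rightarrow> 'a" where
  "lprod xs = foldl (*) (hd xs) (tl xs)"

definition right_banach_module :: "('x::banach \<Rightarrow> 'a::{real_normed_algebra,banach} \<Rightarrow> 'x) \<Rightarrow> bool" where
  "right_banach_module act \<longleftrightarrow> bounded_bilinear act \<and>
     (\<forall>x a b. act (act x a) b = act x (a * b))"

(* dual module A^* with (f \<cdot> a)(b) = f(a b) *)
definition dual_act :: "('a::real_normed_algebra \<Rightarrow>\<^sub>L real) \<Rightarrow> 'a \<Rightarrow> ('a \<Rightarrow>\<^sub>L real)" where
  "dual_act f a = f o\<^sub>L blinfun_mult_right a"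

definition left_n_multipliers :: "nat \<Rightarrow> ('x::real_normed_vector \<Rightarrow> 'a::real_normed_algebra \<Rightarrow> 'x) \<Rightarrow> ('a \<Rightarrow> 'x) set" where
  "left_n_multipliers n act = {T. bounded_linear T \<and>
     (\<forall>as. length as = n \<longrightarrow> T (lprod as) = act (T (lprod (butlast as))) (last as))}"

definition approx_local_left_n_multiplier ::
  "nat \<Rightarrow> ('x::real_normed_vector \<Rightarrow> 'a::real_normed_algebra \<Rightarrow> 'x) \<Rightarrow> ('a \<Rightarrow> 'x) \<Rightarrow> bool" where
  "approx_local_left_n_multiplier n act T \<longleftrightarrow> bounded_linear T \<and>
     (\<forall>a. \<exists>S::nat \<Rightarrow> ('a \<Rightarrow> 'x). (\<forall>m. S m \<in> left_n_multipliers n act) \<and>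
        (\<lambda>m. S m a) \<longlonglongrightarrow> T a)"

definition reflexive_closure :: "('a::real_normed_vector \<Rightarrow> 'y::real_normed_vector) set \<Rightarrow> ('a \<Rightarrow> 'y) set" where
  "reflexive_closure S = {T. bounded_linear T \<and> (\<forall>x. T x \<in> closure {s x | s. s \<in> S})}"

definition algebraically_reflexive :: "('a::real_normed_vector \<Rightarrow> 'y::real_normed_vector) set \<Rightarrow> bool" where
  "algebraically_reflexive S \<longleftrightarrow> reflexive_closure S \<subseteq> S"

definition annihilator :: "('x::zero \<Rightarrow> 'a \<Rightarrow> 'x) \<Rightarrow> 'x \<Rightarrow> 'a set" where
  "annihilator act x = {a. act x a = 0}"

end

theory Submission
  imports Defs
begin

text \<open>A bounded functional \<open>f\<close> on \<open>X\<close> induces a right module map \<open>X \<rightarrow> A\<^sup>*\<close>,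
\<open>x \<mapsto> (b \<mapsto> f (x \<cdot> b))\<close>. Composed with it, \<open>T\<close> becomes a pointwise limit of left
\<open>n\<close>-multipliers into \<open>A\<^sup>*\<close>, so by algebraic reflexivity it is one. The defect
\<open>T(a\<^sub>1\<cdots>a\<^sub>n) - T(a\<^sub>1\<cdots>a\<^sub>n\<^sub>-\<^sub>1)\<cdot>a\<^sub>n\<close> is therefore killed by every \<open>f (\<cdot> b)\<close>;
by Hahn--Banach it annihilates \<open>A\<close>, hence it vanishes.\<close>

text \<open>Partial norm-dominated functionals are encoded by their graphs; single-valuedness
is automatic.\<close>

definition norm_dominated_graph :: "('x::real_normed_vector \<times> real) set \<Rightarrow> bool" where
  "norm_dominated_graph G \<longleftrightarrow>
     (\<forall>x a y b. (x, a) \<in> G \<longrightarrow> (y, b) \<in> G \<longrightarrow> (x + y, a + b) \<in> G) \<and>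
     (\<forall>x a r. (x, a) \<in> G \<longrightarrow> (r *\<^sub>R x, r * a) \<in> G) \<and>
     (\<forall>x a. (x, a) \<in> G \<longrightarrow> a \<le> norm x)"

lemma norm_dominated_graphD:
  assumes "norm_dominated_graph G"
  shows norm_dominated_graph_add: "(x, a) \<in> G \<Longrightarrow> (y, b) \<in> G \<Longrightarrow> (x + y, a + b) \<in> G"
    and norm_dominated_graph_scaleR: "(x, a) \<in> G \<Longrightarrow> (r *\<^sub>R x, r * a) \<in> G"
    and norm_dominated_graph_le_norm: "(x, a) \<in> G \<Longrightarrow> a \<le> norm x"
  using assms unfolding norm_dominated_graph_def by blast+

lemma norm_dominated_graph_single_valued:
  assumes G: "norm_dominated_graph G" and "(x, a) \<in> G" "(x, b) \<in> G"
  shows "a = b"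
proof -
  have "a - b \<le> 0" if "(x, a) \<in> G" "(x, b) \<in> G" for a b
    using norm_dominated_graph_le_norm[OF G norm_dominated_graph_add[OF G that(1)
            norm_dominated_graph_scaleR[OF G that(2), of "-1"]]]
    by simp
  from this[OF assms(2,3)] this[OF assms(3,2)] show ?thesis by simp
qed

lemma norm_dominated_graph_line:
  "norm_dominated_graph (range (\<lambda>t. (t *\<^sub>R d, t * norm d)))"
proof -
  have "t * norm d \<le> norm (t *\<^sub>R d)" for t
    by (simp add: mult_right_mono)
  moreover have "(s *\<^sub>R d + t *\<^sub>R d, s * norm d + t * norm d) = ((s + t) *\<^sub>R d, (s + t) * norm d)"
    and "(r *\<^sub>R t *\<^sub>R d, r * (t * norm d)) = ((r * t) *\<^sub>R d, (r * t) * norm d)" for r s t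
    by (simp_all add: algebra_simps)
  ultimately show ?thesis
    unfolding norm_dominated_graph_def by (auto simp del: scaleR_scaleR)
qed

lemma norm_dominated_graph_Union_chain:
  assumes "chain\<^sub>\<subseteq> C" and "\<And>G. G \<in> C \<Longrightarrow> norm_dominated_graph G"
  shows "norm_dominated_graph (\<Union>C)"
  unfolding norm_dominated_graph_def
proof (intro conjI allI impI)
  fix x a y b assume "(x, a) \<in> \<Union>C" "(y, b) \<in> \<Union>C"
  then obtain G where "G \<in> C" "(x, a) \<in> G" "(y, b) \<in> G"
    using \<open>chain\<^sub>\<subseteq> C\<close> unfolding chain_subset_def by blast
  then show "(x + y, a + b) \<in> \<Union>C" using assms(2) norm_dominated_graph_add by blast
qed (use assms(2) norm_dominated_graphD in blast)+

text \<open>The one-step extension: the new value \<open>c\<close> at \<open>x\<^sub>0\<close> is squeezed between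
\<open>a - \<parallel>h - x\<^sub>0\<parallel>\<close> and \<open>\<parallel>h + x\<^sub>0\<parallel> - a\<close> for all \<open>(h, a) \<in> M\<close>.\<close>

lemma norm_dominated_graph_extend:
  assumes M: "norm_dominated_graph M" and "M \<noteq> {}" and x0: "\<forall>a. (x0, a) \<notin> M"
  shows "\<exists>M'. norm_dominated_graph M' \<and> M \<subseteq> M' \<and> M' \<noteq> M"
proof -
  note add = norm_dominated_graph_add[OF M] and sc = norm_dominated_graph_scaleR[OF M]
    and dom = norm_dominated_graph_le_norm[OF M]
  define L where "L = {a - norm (h - x0) | h a. (h, a) \<in> M}"
  have "(0, 0) \<in> M"
    using \<open>M \<noteq> {}\<close> sc[where r = 0] by fastforce
  hence L_nonempty: "L \<noteq> {}" unfolding L_def by blast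
  have L_le: "l \<le> norm (h' + x0) - b" if "l \<in> L" "(h', b) \<in> M" for l h' b
  proof -
    obtain h a where l: "l = a - norm (h - x0)" "(h, a) \<in> M" using \<open>l \<in> L\<close> unfolding L_def by blast
    have "a + b \<le> norm (h + h')" using dom[OF add[OF l(2) that(2)]] .
    also have "h + h' = (h - x0) + (h' + x0)" by simp
    also have "norm \<dots> \<le> norm (h - x0) + norm (h' + x0)" by (rule norm_triangle_ineq)
    finally show ?thesis using l by simp
  qed
  define c where "c = Sup L"
  have bdd: "bdd_above L" using L_le[OF _ \<open>(0, 0) \<in> M\<close>] unfolding bdd_above_def by blast
  have c_ge: "a - norm (h - x0) \<le> c" if "(h, a) \<in> M" for h a
    unfolding c_def by (rule cSup_upper[OF _ bdd]) (use that L_def in blast)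
  have c_le: "c \<le> norm (h + x0) - a" if "(h, a) \<in> M" for h a
    unfolding c_def by (rule cSup_least[OF L_nonempty]) (use L_le that in blast)
  define M' where "M' = {(h + t *\<^sub>R x0, a + t * c) | h a t. (h, a) \<in> M}"
  have dominated: "a + t * c \<le> norm (h + t *\<^sub>R x0)" if "(h, a) \<in> M" for h a t
  proof (cases t "0::real" rule: linorder_cases)
    case less
    have "inverse (-t) * a - c \<le> norm (inverse (-t) *\<^sub>R h - x0)"
      using c_ge[OF sc[OF that, of "inverse (-t)"]] by linarith
    hence "(-t) * (inverse (-t) * a - c) \<le> (-t) * norm (inverse (-t) *\<^sub>R h - x0)"
      using less by (simp add: mult_left_mono)
    also have "\<dots> = norm ((-t) *\<^sub>R (inverse (-t) *\<^sub>R h - x0))"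
      using less by simp
    also have "(-t) *\<^sub>R (inverse (-t) *\<^sub>R h - x0) = h + t *\<^sub>R x0"
      using less by (simp add: scaleR_diff_right)
    finally show ?thesis using less by (simp add: algebra_simps)
  next
    case equal
    then show ?thesis using dom[OF that] by simp
  next
    case greater
    have "inverse t * a + c \<le> norm (inverse t *\<^sub>R h + x0)"
      using c_le[OF sc[OF that], of "inverse t"] by simp
    hence "t * (inverse t * a + c) \<le> t * norm (inverse t *\<^sub>R h + x0)"
      using greater by (simp add: mult_left_mono)
    also have "\<dots> = norm (t *\<^sub>R (inverse t *\<^sub>R h + x0))"
      using greater by simp
    also have "t *\<^sub>R (inverse t *\<^sub>R h + x0) = h + t *\<^sub>R x0"
      using greater by (simp add: scaleR_add_right)
    finally show ?thesis using greater by (simp add: algebra_simps)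
  qed
  have "norm_dominated_graph M'"
    unfolding norm_dominated_graph_def
  proof (intro conjI allI impI)
    fix x a y b assume "(x, a) \<in> M'" "(y, b) \<in> M'"
    then obtain h1 a1 t1 h2 a2 t2 where "x = h1 + t1 *\<^sub>R x0" "a = a1 + t1 * c" "(h1, a1) \<in> M"
      "y = h2 + t2 *\<^sub>R x0" "b = a2 + t2 * c" "(h2, a2) \<in> M" unfolding M'_def by blast
    then show "(x + y, a + b) \<in> M'" unfolding M'_def
      by (intro CollectI exI[of _ "h1 + h2"] exI[of _ "a1 + a2"] exI[of _ "t1 + t2"])
         (auto simp: add algebra_simps)
  next
    fix x a r assume "(x, a) \<in> M'"
    then obtain h a1 t where "x = h + t *\<^sub>R x0" "a = a1 + t * c" "(h, a1) \<in> M"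
      unfolding M'_def by blast
    then have "(r *\<^sub>R x, r * a) = (r *\<^sub>R h + (r * t) *\<^sub>R x0, r * a1 + (r * t) * c)"
      by (simp add: algebra_simps)
    moreover have "(r *\<^sub>R h, r * a1) \<in> M" using sc \<open>(h, a1) \<in> M\<close> .
    ultimately show "(r *\<^sub>R x, r * a) \<in> M'" unfolding M'_def by blast
  next
    fix x a assume "(x, a) \<in> M'"
    then show "a \<le> norm x" unfolding M'_def using dominated by blast
  qed
  moreover have "M \<subseteq> M'"
    unfolding M'_def by (force intro: exI[of _ 0])
  moreover have "(x0, c) \<in> M'"
    unfolding M'_def using \<open>(0, 0) \<in> M\<close> by (force intro: exI[of _ 1])
  ultimately show ?thesis using x0 by blast
qed

lemma exists_norming_functional:
  fixes d :: "'x::real_normed_vector"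
  obtains f :: "'x \<Rightarrow> real" where "bounded_linear f" "f d = norm d" "\<And>x. \<bar>f x\<bar> \<le> norm x"
proof -
  let ?A = "{G. norm_dominated_graph G \<and> (d, norm d) \<in> G}"
  have "\<exists>U\<in>?A. \<forall>G\<in>C. G \<subseteq> U" if "C \<in> chains ?A" for C
  proof (cases "C = {}")
    case True
    have "(d, norm d) \<in> range (\<lambda>t. (t *\<^sub>R d, t * norm d))"
      using rangeI[of "\<lambda>t. (t *\<^sub>R d, t * norm d)" 1] by simp
    with True show ?thesis using norm_dominated_graph_line by blast
  next
    case False
    with that have "\<Union>C \<in> ?A"
      using norm_dominated_graph_Union_chain unfolding chains_def by blast
    then show ?thesis by blast
  qed
  from Zorn_Lemma2[OF ballI[OF this]] obtain M where M: "norm_dominated_graph M" "(d, norm d) \<in> M"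
    and maximal: "\<And>G. norm_dominated_graph G \<Longrightarrow> M \<subseteq> G \<Longrightarrow> G = M" by blast
  have total: "\<exists>a. (x, a) \<in> M" for x
    using norm_dominated_graph_extend[OF M(1) _, of x] M(2) maximal by blast
  define f where "f x = (THE a. (x, a) \<in> M)" for x
  have graph: "(x, f x) \<in> M" for x
    unfolding f_def by (rule theI') (use total norm_dominated_graph_single_valued[OF M(1)] in blast)
  have f_eqI: "(x, a) \<in> M \<Longrightarrow> f x = a" for x a
    using norm_dominated_graph_single_valued[OF M(1) graph] by blast
  have add: "f (x + y) = f x + f y" for x y
    by (rule f_eqI, rule norm_dominated_graph_add[OF M(1) graph graph])
  have scale: "f (r *\<^sub>R x) = r * f x" for r x
    by (rule f_eqI, rule norm_dominated_graph_scaleR[OF M(1) graph])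
  have le: "f x \<le> norm x" for x
    by (rule norm_dominated_graph_le_norm[OF M(1) graph])
  have abs_le: "\<bar>f x\<bar> \<le> norm x" for x
    using le[of x] le[of "-x"] scale[of "-1" x] by simp
  have "bounded_linear f"
    by (intro bounded_linear_intro[where K = 1]) (auto simp: add scale abs_le)
  moreover have "f d = norm d" using f_eqI M(2) .
  ultimately show ?thesis using abs_le that by blast
qed

lemma bounded_linear_functionals_separate:
  fixes x :: "'x::real_normed_vector"
  assumes "\<And>f :: 'x \<Rightarrow> real. bounded_linear f \<Longrightarrow> f x = 0"
  shows "x = 0"
proof -
  obtain f :: "'x \<Rightarrow> real" where "bounded_linear f" "f x = norm x"
    using exists_norming_functional by blast
  with assms[OF \<open>bounded_linear f\<close>] show ?thesis by simp
qed

lemma left_n_multipliers_comp: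
  fixes act :: "'x::real_normed_vector \<Rightarrow> 'a::real_normed_algebra \<Rightarrow> 'x"
    and act' :: "'y::real_normed_vector \<Rightarrow> 'a \<Rightarrow> 'y"
  assumes \<Phi>: "bounded_linear \<Phi>" and intertwines: "\<And>x a. \<Phi> (act x a) = act' (\<Phi> x) a"
    and U: "U \<in> left_n_multipliers n act"
  shows "\<Phi> \<circ> U \<in> left_n_multipliers n act'"
  using U bounded_linear_compose[OF \<Phi>] unfolding left_n_multipliers_def comp_def
  by (auto simp: intertwines)

lemma approx_local_left_n_multiplier_comp_in_reflexive_closure:
  fixes act :: "'x::real_normed_vector \<Rightarrow> 'a::real_normed_algebra \<Rightarrow> 'x"
    and act' :: "'y::real_normed_vector \<Rightarrow> 'a \<Rightarrow> 'y"
  assumes \<Phi>: "bounded_linear \<Phi>" and intertwines: "\<And>x a. \<Phi> (act x a) = act' (\<Phi> x) a"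
    and T: "approx_local_left_n_multiplier n act T"
  shows "\<Phi> \<circ> T \<in> reflexive_closure (left_n_multipliers n act')"
  unfolding reflexive_closure_def
proof (intro CollectI conjI allI)
  show "bounded_linear (\<Phi> \<circ> T)"
    using T bounded_linear_compose[OF \<Phi>]
    unfolding approx_local_left_n_multiplier_def comp_def by blast
  fix a
  obtain S where S: "\<And>m. S m \<in> left_n_multipliers n act" and lim: "(\<lambda>m. S m a) \<longlonglongrightarrow> T a"
    using T unfolding approx_local_left_n_multiplier_def by blast
  have "(\<lambda>m. (\<Phi> \<circ> S m) a) \<longlonglongrightarrow> (\<Phi> \<circ> T) a"
    unfolding comp_def by (rule bounded_linear.tendsto[OF \<Phi> lim])
  moreover have "(\<Phi> \<circ> S m) a \<in> {s a | s. s \<in> left_n_multipliers n act'}" for m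
    using left_n_multipliers_comp[OF \<Phi> intertwines S] by blast
  ultimately show "(\<Phi> \<circ> T) a \<in> closure {s a | s. s \<in> left_n_multipliers n act'}"
    unfolding closure_sequential by (intro exI[of _ "\<lambda>m. (\<Phi> \<circ> S m) a"]) blast
qed

definition module_dual_map ::
  "('x::real_normed_vector \<Rightarrow> 'a::real_normed_algebra \<Rightarrow> 'x) \<Rightarrow> ('x \<Rightarrow> real) \<Rightarrow> 'x \<Rightarrow> ('a \<Rightarrow>\<^sub>L real)"
  where "module_dual_map act f x = Blinfun f o\<^sub>L bounded_bilinear.prod_right act x"

lemma module_dual_map_apply:
  assumes "bounded_bilinear act" and "bounded_linear f"
  shows "module_dual_map act f x b = f (act x b)"
  using assms by (simp add: module_dual_map_def bounded_linear_Blinfun_apply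
      bounded_bilinear.prod_right.rep_eq)

lemma bounded_linear_module_dual_map:
  assumes "bounded_bilinear act"
  shows "bounded_linear (module_dual_map act f)"
  unfolding module_dual_map_def
  by (rule bounded_linear_compose[OF bounded_bilinear.bounded_linear_right[OF bounded_bilinear_blinfun_compose]
        bounded_bilinear.bounded_linear_prod_right[OF assms]])

lemma module_dual_map_act:
  assumes "right_banach_module act" and "bounded_linear f"
  shows "module_dual_map act f (act x a) = dual_act (module_dual_map act f x) a"
  using assms by (intro blinfun_eqI)
    (simp add: right_banach_module_def module_dual_map_apply dual_act_def)

lemma module_dual_map_comp_approx_local_left_n_multiplier:
  fixes act :: "'x::banach \<Rightarrow> 'a::{real_normed_algebra,banach} \<Rightarrow> 'x"
  assumes "algebraically_reflexive (left_n_multipliers n (dual_act :: ('a \<Rightarrow>\<^sub>L real) \<Rightarrow> 'a \<Rightarrow> _))"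
    and act: "right_banach_module act" and T: "approx_local_left_n_multiplier n act T"
    and f: "bounded_linear f"
  shows "module_dual_map act f \<circ> T \<in> left_n_multipliers n dual_act"
  using approx_local_left_n_multiplier_comp_in_reflexive_closure[OF bounded_linear_module_dual_map
      module_dual_map_act[OF act f] T] act assms(1)
  unfolding algebraically_reflexive_def right_banach_module_def by blast

theorem theorem3p3:
  fixes act :: "'x::banach \<Rightarrow> 'a::{real_normed_algebra,banach} \<Rightarrow> 'x"
    and n :: nat and T :: "'a \<Rightarrow> 'x"
  assumes "n \<ge> 2"
    and "algebraically_reflexive (left_n_multipliers n (dual_act :: ('a \<Rightarrow>\<^sub>L real) \<Rightarrow> 'a \<Rightarrow> _))"
    and "right_banach_module act"
    and "{x. annihilator act x = UNIV} = {0}"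
    and "approx_local_left_n_multiplier n act T"
  shows "T \<in> left_n_multipliers n act"
proof -
  have act: "bounded_bilinear act" using assms(3) unfolding right_banach_module_def by blast
  have "T (lprod as) = act (T (lprod (butlast as))) (last as)" if "length as = n" for as
  proof -
    define D where "D = T (lprod as) - act (T (lprod (butlast as))) (last as)"
    have "act D b = 0" for b
    proof (rule bounded_linear_functionals_separate)
      fix f :: "'x \<Rightarrow> real" assume f: "bounded_linear f"
      have "module_dual_map act f D = 0"
        using module_dual_map_comp_approx_local_left_n_multiplier[OF assms(2,3,5) f] that
        unfolding D_def left_n_multipliers_def
        by (simp add: module_dual_map_act[OF assms(3) f]
            linear_diff[OF bounded_linear.linear[OF bounded_linear_module_dual_map[OF act]]])
      then show "f (act D b) = 0" by (simp flip: module_dual_map_apply[OF act f])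
    qed
    then have "D = 0" using assms(4) unfolding annihilator_def by blast
    then show ?thesis unfolding D_def by simp
  qed
  then show ?thesis
    using assms(5) unfolding approx_local_left_n_multiplier_def left_n_multipliers_def by blast
qed

end
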